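(* Let $u\in L_{\mathrm{up}}$ and $\ell\in F_u$. Then $P_{u,\ell}$ is nonempty and is the edge set of a path.
   Context: Let $(G=(V,E),L,w)$ be a WTAP instance (spanning tree $G$, links $L\subseteq\binom V2$, weights $w>0$) with a fixed root $r\in V$, and let $F\subseteq L$ be a WTAP solution, i.e. $\bigcup_{\ell\in F}P_\ell=E$, where $P_\ell$ is the edge set of the tree path between the endpoints of $\ell$ and $V_\ell$ its vertex set. Ancestors of $v$ are the vertices on the $r$-$v$ path in $G$ (including $r$ and $v$); descendants are defined reciprocally. $\mathrm{apex}(\ell)$ is the vertex of $V_\ell$ closest to $r$. An up-link is a link $\{t,b\}$ with $t$ an ancestor of $b$; $L_{\mathrm{up}}$ is the set of up-links. For $v\in V$ let $B_v=\{\ell\in F\colon \mathrm{apex}(\ell)\text{ is a descendant of }v\}$. For an up-link $u=\{t,b\}$ with $t$ an ancestor of $b$, let $v_u$ be the ancestor of $t$ farthest from $r$ such that $P_u\subseteq\bigcup_{\ell\in B_{v_u}}P_\ell$, and fix $F_u\subseteq B_{v_u}$ inclusion-wise minimal with $P_u\subseteq\bigcup_{\ell\in F_u}P_\ell$. For $\ell\in F_u$ let $P_{u,\ell}=P_u\setminus\bigcup_{\bar\ell\in F_u\setminus\{\ell\}}P_{\bar\ell}$. *)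

theory Defs
  imports Complex_Main
begin

text \<open>Graphs: vertices of type 'a, edges are 2-element vertex sets.\<close>

definition gpath :: "'a set set \<Rightarrow> 'a list \<Rightarrow> bool" where
  "gpath E xs \<longleftrightarrow> xs \<noteq> [] \<and> distinct xs \<and>
     (\<forall>i. Suc i < length xs \<longrightarrow> {xs ! i, xs ! Suc i} \<in> E)"

definition path_edges :: "'a list \<Rightarrow> 'a set set" where
  "path_edges xs = {{xs ! i, xs ! Suc i} | i. Suc i < length xs}"

definition is_tree :: "'a set \<Rightarrow> 'a set set \<Rightarrow> bool" where
  "is_tree V E \<longleftrightarrow> finite V \<and> E \<subseteq> {e. e \<subseteq> V \<and> card e = 2} \<and>
     (\<forall>a\<in>V. \<forall>b\<in>V. \<exists>!xs. gpath E xs \<and> hd xs = a \<and> last xs = b)"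

definition tpath :: "'a set set \<Rightarrow> 'a \<Rightarrow> 'a \<Rightarrow> 'a list" where
  "tpath E a b = (THE xs. gpath E xs \<and> hd xs = a \<and> last xs = b)"

definition tedges :: "'a set set \<Rightarrow> 'a \<Rightarrow> 'a \<Rightarrow> 'a set set" where
  "tedges E a b = path_edges (tpath E a b)"

definition lP :: "'a set set \<Rightarrow> 'a set \<Rightarrow> 'a set set" where
  "lP E l = \<Union>{tedges E a b | a b. l = {a, b}}"

definition lV :: "'a set set \<Rightarrow> 'a set \<Rightarrow> 'a set" where
  "lV E l = \<Union>{set (tpath E a b) | a b. l = {a, b}}"

definition anc :: "'a set set \<Rightarrow> 'a \<Rightarrow> 'a \<Rightarrow> 'a \<Rightarrow> bool" where
  "anc E r x v \<longleftrightarrow> x \<in> set (tpath E r v)"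

definition rdist :: "'a set set \<Rightarrow> 'a \<Rightarrow> 'a \<Rightarrow> nat" where
  "rdist E r v = length (tpath E r v)"

definition apex :: "'a set set \<Rightarrow> 'a \<Rightarrow> 'a set \<Rightarrow> 'a" where
  "apex E r l = (THE x. x \<in> lV E l \<and> (\<forall>y\<in>lV E l. rdist E r x \<le> rdist E r y))"

definition up_link :: "'a set set \<Rightarrow> 'a \<Rightarrow> 'a set \<Rightarrow> bool" where
  "up_link E r l \<longleftrightarrow> (\<exists>t b. l = {t, b} \<and> t \<noteq> b \<and> anc E r t b)"

definition L_up :: "'a set set \<Rightarrow> 'a \<Rightarrow> 'a set set \<Rightarrow> 'a set set" where
  "L_up E r L = {l \<in> L. up_link E r l}"

definition up_top :: "'a set set \<Rightarrow> 'a \<Rightarrow> 'a set \<Rightarrow> 'a" where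
  "up_top E r u = (THE t. \<exists>b. u = {t, b} \<and> t \<noteq> b \<and> anc E r t b)"

definition Bset :: "'a set set \<Rightarrow> 'a \<Rightarrow> 'a set set \<Rightarrow> 'a \<Rightarrow> 'a set set" where
  "Bset E r F v = {l \<in> F. anc E r v (apex E r l)}"

definition covers :: "'a set set \<Rightarrow> 'a set \<Rightarrow> 'a set set \<Rightarrow> bool" where
  "covers E u S \<longleftrightarrow> lP E u \<subseteq> \<Union>(lP E ` S)"

definition v_of :: "'a set set \<Rightarrow> 'a \<Rightarrow> 'a set set \<Rightarrow> 'a set \<Rightarrow> 'a" where
  "v_of E r F u = (THE x. anc E r x (up_top E r u) \<and> covers E u (Bset E r F x) \<and>
      (\<forall>y. anc E r y (up_top E r u) \<and> covers E u (Bset E r F y) \<longrightarrow> rdist E r y \<le> rdist E r x))"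

definition is_Fu :: "'a set set \<Rightarrow> 'a \<Rightarrow> 'a set set \<Rightarrow> 'a set \<Rightarrow> 'a set set \<Rightarrow> bool" where
  "is_Fu E r F u S \<longleftrightarrow> S \<subseteq> Bset E r F (v_of E r F u) \<and> covers E u S \<and>
      (\<forall>S'. S' \<subset> S \<longrightarrow> \<not> covers E u S')"

definition Pul :: "'a set set \<Rightarrow> 'a set \<Rightarrow> 'a set set \<Rightarrow> 'a set \<Rightarrow> 'a set set" where
  "Pul E u S l = lP E u - \<Union>(lP E ` (S - {l}))"

end

theory Submission
  imports Defs
begin

text \<open>Index the edges of the tree path of u along that path. Since two paths in a tree meet in a
  path, every link of F_u covers a contiguous block of these edges, and by minimality every link
  of F_u covers some edge that no other link of F_u covers. Suppose i < j < k, the edges i and k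
  are covered only by l, and edge j is covered by some m other than l. Then the edge covered only
  by m lies neither before i nor after k (the block of m would contain edge i or edge k) nor
  between i and k (the block of l would contain it). So the edges covered only by l form a
  nonempty contiguous block, i.e. the edge set of a path.\<close>

lemma path_edges_eq_image: "path_edges xs = (\<lambda>i. {xs!i, xs!Suc i}) ` {..<length xs - 1}"
  unfolding path_edges_def by (auto simp: less_diff_conv)

lemma path_edges_memD: "{x, y} \<in> path_edges xs \<Longrightarrow> x \<in> set xs"
  by (auto simp: path_edges_def doubleton_eq_iff)

lemma hd_drop_take: "p \<le> q \<Longrightarrow> q < length xs \<Longrightarrow> hd (drop p (take (Suc q) xs)) = xs!p"
  by (simp add: hd_drop_conv_nth)

lemma last_drop_take: "p \<le> q \<Longrightarrow> q < length xs \<Longrightarrow> last (drop p (take (Suc q) xs)) = xs!q"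
  by (simp add: last_conv_nth)

lemma path_edges_drop_take:
  assumes "p \<le> q" "q < length xs"
  shows "path_edges (drop p (take (Suc q) xs)) = (\<lambda>j. {xs!j, xs!Suc j}) ` {p..<q}"
proof -
  have "path_edges (drop p (take (Suc q) xs)) = (\<lambda>i. {xs!(p + i), xs!Suc (p + i)}) ` {..<q - p}"
    using assms by (simp add: path_edges_eq_image)
  also have "\<dots> = (\<lambda>j. {xs!j, xs!Suc j}) ` ((+) p ` {..<q - p})"
    by (simp add: image_image)
  also have "(+) p ` {..<q - p} = {p..<q}"
    using assms(1) by (simp add: lessThan_atLeast0 atLeastLessThan_add_Un)
  finally show ?thesis .
qed

lemma gpath_drop_take:
  assumes "gpath E xs" "p \<le> q" "q < length xs"
  shows "gpath E (drop p (take (Suc q) xs))"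
  using assms unfolding gpath_def by (auto simp: add.commute[of p] less_diff_conv)

lemma gpath_iff_path_edges: "gpath E xs \<longleftrightarrow> xs \<noteq> [] \<and> distinct xs \<and> path_edges xs \<subseteq> E"
  unfolding gpath_def path_edges_def by blast

lemma path_edges_rev_subset: "path_edges (rev xs) \<subseteq> path_edges xs"
proof
  fix x assume "x \<in> path_edges (rev xs)"
  then obtain i where i: "Suc i < length xs" "x = {rev xs ! i, rev xs ! Suc i}"
    by (auto simp: path_edges_def)
  define k where "k = length xs - Suc (Suc i)"
  have "Suc k < length xs" "x = {xs ! k, xs ! Suc k}"
    using i by (auto simp: k_def rev_nth Suc_diff_Suc insert_commute)
  then show "x \<in> path_edges xs" by (auto simp: path_edges_def)
qed

lemma path_edges_rev: "path_edges (rev xs) = path_edges xs"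
  using path_edges_rev_subset[of xs] path_edges_rev_subset[of "rev xs"] by simp

lemma gpath_rev: "gpath E xs \<Longrightarrow> gpath E (rev xs)"
  by (simp add: gpath_iff_path_edges path_edges_rev)

lemma tpath_unique:
  assumes "is_tree V E" "a \<in> V" "b \<in> V" "gpath E xs" "hd xs = a" "last xs = b"
  shows "tpath E a b = xs"
  unfolding tpath_def
  by (rule the1_equality) (use assms in \<open>auto simp: is_tree_def\<close>)

lemma gpath_tpath:
  assumes "is_tree V E" "a \<in> V" "b \<in> V"
  shows "gpath E (tpath E a b)" "hd (tpath E a b) = a" "last (tpath E a b) = b"
proof -
  have "\<exists>!xs. gpath E xs \<and> hd xs = a \<and> last xs = b"
    using assms by (simp add: is_tree_def)
  then have "gpath E (tpath E a b) \<and> hd (tpath E a b) = a \<and> last (tpath E a b) = b"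
    unfolding tpath_def by (rule theI')
  then show "gpath E (tpath E a b)" "hd (tpath E a b) = a" "last (tpath E a b) = b"
    by blast+
qed

lemma tpath_commute:
  assumes "is_tree V E" "a \<in> V" "b \<in> V"
  shows "tpath E b a = rev (tpath E a b)"
  using gpath_tpath[OF assms] gpath_rev
  by (intro tpath_unique[OF assms(1,3,2)]) (auto simp: hd_rev last_rev)

lemma tedges_commute:
  assumes "is_tree V E" "a \<in> V" "b \<in> V"
  shows "tedges E b a = tedges E a b"
  using tpath_commute[OF assms] by (simp add: tedges_def path_edges_rev)

lemma lP_doubleton:
  assumes "is_tree V E" "a \<in> V" "b \<in> V"
  shows "lP E {a, b} = tedges E a b"
proof -
  have "{tedges E a' b' | a' b'. {a, b} = {a', b'}} = {tedges E a b}"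
    using tedges_commute[OF assms] by (auto simp: doubleton_eq_iff)
  then show ?thesis unfolding lP_def by simp
qed

lemma lP_eq_path_edges:
  assumes "is_tree V E" "l \<subseteq> V" "card l = 2"
  shows "\<exists>ys. gpath E ys \<and> lP E l = path_edges ys"
proof -
  obtain a b where "l = {a, b}" "a \<in> V" "b \<in> V"
    using assms(2,3) by (auto simp: card_2_iff)
  then have "gpath E (tpath E a b)" "lP E l = path_edges (tpath E a b)"
    using gpath_tpath(1)[OF assms(1)] lP_doubleton[OF assms(1)] by (simp_all add: tedges_def)
  then show ?thesis
    by blast
qed

lemma tedges_subset_path_edges:
  assumes T: "is_tree V E" and Y: "gpath E ys"
    and a: "a \<in> set ys" "a \<in> V" and b: "b \<in> set ys" "b \<in> V"
  shows "tedges E a b \<subseteq> path_edges ys"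
proof -
  have sub: "tedges E (ys!s) (ys!t) \<subseteq> path_edges ys"
    if "s \<le> t" "t < length ys" "ys!s \<in> V" "ys!t \<in> V" for s t
  proof -
    have "tpath E (ys!s) (ys!t) = drop s (take (Suc t) ys)"
      using that by (intro tpath_unique[OF T] gpath_drop_take[OF Y] hd_drop_take last_drop_take)
    then show ?thesis
      using that by (auto simp: tedges_def path_edges_drop_take path_edges_eq_image)
  qed
  obtain s t where "s < length ys" "t < length ys" "a = ys!s" "b = ys!t"
    using a(1) b(1) by (metis in_set_conv_nth)
  then show ?thesis
    using sub[of s t] sub[of t s] tedges_commute[OF T a(2) b(2)] a(2) b(2) by fastforce
qed

lemma tree_path_edges_convex:
  assumes T: "is_tree V E" and X: "gpath E xs" and Y: "gpath E ys"
    and ijk: "i < j" "j < k" "Suc k < length xs"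
    and ends: "{xs!i, xs!Suc i} \<in> path_edges ys" "{xs!k, xs!Suc k} \<in> path_edges ys"
  shows "{xs!j, xs!Suc j} \<in> path_edges ys"
proof -
  have EV: "\<And>x y. {x, y} \<in> E \<Longrightarrow> x \<in> V \<and> y \<in> V"
    using T by (auto simp: is_tree_def)
  have edges: "\<And>m. Suc m < length xs \<Longrightarrow> {xs!m, xs!Suc m} \<in> E"
    using X by (simp add: gpath_def)
  have V: "xs!Suc i \<in> V" "xs!k \<in> V"
    using EV edges ijk by (meson Suc_lessD less_trans_Suc)+
  have Y': "xs!Suc i \<in> set ys" "xs!k \<in> set ys"
    using ends path_edges_memD[of "xs!Suc i" "xs!i" ys] path_edges_memD[of "xs!k" "xs!Suc k" ys]
    by (simp_all add: insert_commute)
  have "tpath E (xs!Suc i) (xs!k) = drop (Suc i) (take (Suc k) xs)"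
    using ijk by (intro tpath_unique[OF T V] gpath_drop_take[OF X] hd_drop_take last_drop_take) auto
  then have "{xs!j, xs!Suc j} \<in> tedges E (xs!Suc i) (xs!k)"
    using ijk by (simp add: tedges_def path_edges_drop_take)
  then show ?thesis
    using tedges_subset_path_edges[OF T Y Y'(1) V(1) Y'(2) V(2)] by blast
qed

lemma lP_convex:
  assumes T: "is_tree V E" and m: "m \<subseteq> V" "card m = 2" and X: "gpath E xs"
    and ijk: "i < j" "j < k" "Suc k < length xs"
    and ends: "{xs!i, xs!Suc i} \<in> lP E m" "{xs!k, xs!Suc k} \<in> lP E m"
  shows "{xs!j, xs!Suc j} \<in> lP E m"
proof -
  obtain ys where Y: "gpath E ys" "lP E m = path_edges ys"
    using lP_eq_path_edges[OF T m] by blast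
  show ?thesis
    using tree_path_edges_convex[OF T X Y(1) ijk] ends by (simp add: Y(2))
qed

lemma minimal_cover_exclusive:
  assumes "A \<subseteq> \<Union>(P ` S)" "\<forall>S' \<subset> S. \<not> A \<subseteq> \<Union>(P ` S')" "m \<in> S"
  shows "\<exists>x\<in>A. x \<in> P m \<and> (\<forall>m'\<in>S - {m}. x \<notin> P m')"
proof -
  have "\<not> A \<subseteq> \<Union>(P ` (S - {m}))"
    using assms(2,3) by blast
  then show ?thesis
    using assms(1) by blast
qed

lemma convex_nat_set_eq_atLeastAtMost:
  fixes J :: "nat set"
  assumes "finite J" "J \<noteq> {}" "\<And>i j k. i \<in> J \<Longrightarrow> k \<in> J \<Longrightarrow> i < j \<Longrightarrow> j < k \<Longrightarrow> j \<in> J"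
  shows "J = {Min J..Max J}"
proof
  show "J \<subseteq> {Min J..Max J}"
    using assms(1) by auto
  show "{Min J..Max J} \<subseteq> J"
  proof
    fix j assume "j \<in> {Min J..Max J}"
    moreover have "Min J \<in> J" "Max J \<in> J"
      using assms(1,2) by simp_all
    ultimately show "j \<in> J"
      using assms(3) by (metis atLeastAtMost_iff le_neq_implies_less)
  qed
qed

lemma minimal_cover_exclusive_interval:
  fixes e :: "nat \<Rightarrow> 'b" and P :: "'s \<Rightarrow> 'b set"
  assumes convex: "\<And>m i j k. m \<in> S \<Longrightarrow> i < j \<Longrightarrow> j < k \<Longrightarrow> k < n \<Longrightarrow>
      e i \<in> P m \<Longrightarrow> e k \<in> P m \<Longrightarrow> e j \<in> P m"
    and cover: "e ` {..<n} \<subseteq> \<Union>(P ` S)"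
    and minimal: "\<forall>S' \<subset> S. \<not> e ` {..<n} \<subseteq> \<Union>(P ` S')"
    and l: "l \<in> S"
  obtains p q where "p \<le> q" "q < n" "{i. i < n \<and> (\<forall>m\<in>S - {l}. e i \<notin> P m)} = {p..q}"
proof -
  define J where "J = {i. i < n \<and> (\<forall>m\<in>S - {l}. e i \<notin> P m)}"
  have exclusive_edge: "\<exists>i<n. e i \<in> P m \<and> (\<forall>m'\<in>S - {m}. e i \<notin> P m')" if "m \<in> S" for m
    using minimal_cover_exclusive[OF cover minimal that] by blast
  have J_in_l: "e i \<in> P l" if "i \<in> J" for i
    using that cover by (auto simp: J_def)
  have "finite J"
    by (rule finite_subset[of _ "{..<n}"]) (auto simp: J_def)
  moreover have "J \<noteq> {}"
    using exclusive_edge[OF l] by (auto simp: J_def)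
  moreover have "j \<in> J" if ij: "i \<in> J" "k \<in> J" "i < j" "j < k" for i j k
  proof (rule ccontr)
    assume "j \<notin> J"
    moreover have "k < n"
      using ij(2) by (simp add: J_def)
    ultimately obtain m where m: "m \<in> S" "m \<noteq> l" "e j \<in> P m"
      using ij(4) by (auto simp: J_def)
    obtain p where p: "p < n" "e p \<in> P m" "\<forall>m'\<in>S - {m}. e p \<notin> P m'"
      using exclusive_edge[OF m(1)] by blast
    have "e i \<notin> P m" "e k \<notin> P m"
      using ij(1,2) m(1,2) by (auto simp: J_def)
    then consider "p < i" | "k < p" | "i < p" "p < k"
      using p(2) by (metis linorder_neqE_nat)
    then show False
    proof cases
      case 1
      then show False
        using convex[OF m(1) 1 ij(3)] \<open>k < n\<close> ij(4) p(2) m(3) \<open>e i \<notin> P m\<close> by simp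
    next
      case 2
      then show False
        using convex[OF m(1) ij(4) 2 p(1) m(3) p(2)] \<open>e k \<notin> P m\<close> by simp
    next
      case 3
      then show False
        using convex[OF l 3 \<open>k < n\<close> J_in_l[OF ij(1)] J_in_l[OF ij(2)]] p(3) l m(2) by blast
    qed
  qed
  ultimately have "J = {Min J..Max J}"
    by (rule convex_nat_set_eq_atLeastAtMost)
  moreover have "Max J < n"
    using \<open>finite J\<close> \<open>J \<noteq> {}\<close> Max_in by (auto simp: J_def)
  moreover have "Min J \<le> Max J"
    using \<open>finite J\<close> \<open>J \<noteq> {}\<close> by simp
  ultimately show ?thesis
    using that[of "Min J" "Max J"] unfolding J_def[symmetric] by blast
qed

lemma minimal_cover_Pul_path:
  assumes tree: "is_tree V E" and links: "insert u S \<subseteq> {m. m \<subseteq> V \<and> card m = 2}"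
    and cover: "covers E u S" and minimal: "\<forall>S' \<subset> S. \<not> covers E u S'" and l: "l \<in> S"
  shows "Pul E u S l \<noteq> {} \<and> (\<exists>xs. gpath E xs \<and> path_edges xs = Pul E u S l)"
proof -
  have "u \<subseteq> V" "card u = 2"
    using links by simp_all
  then obtain xs where X: "gpath E xs" "lP E u = path_edges xs"
    using lP_eq_path_edges[OF tree] by blast
  define e where "e i = {xs!i, xs!Suc i}" for i
  define n where "n = length xs - 1"
  have Pu: "lP E u = e ` {..<n}"
    using X(2) by (simp add: path_edges_eq_image e_def n_def)
  have convex: "e j \<in> lP E m"
    if "m \<in> S" "i < j" "j < k" "k < n" "e i \<in> lP E m" "e k \<in> lP E m" for m i j k
  proof -
    have "m \<subseteq> V" "card m = 2"
      using that(1) links by auto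
    then show ?thesis
      using lP_convex[OF tree _ _ X(1), of m i j k] that(2-6) by (simp add: e_def n_def)
  qed
  have cover_e: "e ` {..<n} \<subseteq> \<Union>(lP E ` S)"
    and minimal_e: "\<forall>S' \<subset> S. \<not> e ` {..<n} \<subseteq> \<Union>(lP E ` S')"
    using cover minimal by (simp_all add: covers_def Pu)
  obtain p q where "p \<le> q" "q < n"
    and J: "{i. i < n \<and> (\<forall>m\<in>S - {l}. e i \<notin> lP E m)} = {p..q}"
    by (rule minimal_cover_exclusive_interval[OF convex cover_e minimal_e l])
  define ys where "ys = drop p (take (Suc (Suc q)) xs)"
  have "gpath E ys"
    using gpath_drop_take[OF X(1), of p "Suc q"] \<open>p \<le> q\<close> \<open>q < n\<close> by (simp add: ys_def n_def)
  have "Pul E u S l = e ` {p..q}"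
    unfolding Pul_def Pu J[symmetric] by auto
  moreover have "e ` {p..q} = path_edges ys"
    using \<open>p \<le> q\<close> \<open>q < n\<close>
    by (simp add: ys_def path_edges_drop_take e_def n_def atLeastLessThanSuc_atLeastAtMost)
  ultimately show ?thesis
    using \<open>gpath E ys\<close> \<open>p \<le> q\<close> by auto
qed

theorem lemma7:
  fixes V :: "'a set" and E :: "'a set set" and L F :: "'a set set"
    and w :: "'a set \<Rightarrow> real" and r :: 'a and u l :: "'a set" and Fu :: "'a set set"
  assumes tree: "is_tree V E"
    and root: "r \<in> V"
    and links: "L \<subseteq> {l. l \<subseteq> V \<and> card l = 2}"
    and weights: "\<forall>l\<in>L. w l > 0"
    and FL: "F \<subseteq> L"
    and Fsol: "\<Union>(lP E ` F) = E"
    and u: "u \<in> L_up E r L"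
    and Fu: "is_Fu E r F u Fu"
    and l: "l \<in> Fu"
  shows "Pul E u Fu l \<noteq> {} \<and> (\<exists>xs. gpath E xs \<and> path_edges xs = Pul E u Fu l)"
proof (rule minimal_cover_Pul_path[OF tree _ _ _ l])
  have "u \<in> L" "Fu \<subseteq> L"
    using u Fu FL by (auto simp: L_up_def is_Fu_def Bset_def)
  then show "insert u Fu \<subseteq> {m. m \<subseteq> V \<and> card m = 2}"
    using links by blast
  show "covers E u Fu" "\<forall>S' \<subset> Fu. \<not> covers E u S'"
    using Fu by (simp_all add: is_Fu_def)
qed

end
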